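(* Let $K(x,y)=\dfrac{\log\frac{|x-y|}{\langle x\rangle}}{1+\log\langle y\rangle}$ for $x,y\in\mathbb{R}^2$. For any $p\in[1,\infty)$ and $\varepsilon>0$ there exist a function $W(x,y)\ge0$ with $\|W\|_{L^\infty_yL^p_x}\le\varepsilon$ and a constant $C_0$ such that $|K(x,y)|\le C_0+W(x,y)$ for all $(x,y)\in\mathbb{R}^{2+2}$.
   Context: $\langle x\rangle=(1+|x|^2)^{1/2}$; $\|W\|_{L^\infty_yL^p_x}=\sup_y\|W(\cdot,y)\|_{L^p(\mathbb{R}^2)}$. *)

theory Defs
  imports "HOL-Analysis.Analysis"
begin

definition jbr :: "real^2 \<Rightarrow> real" where
  "jbr x = sqrt (1 + (norm x)\<^sup>2)"

definition K_kernel :: "real^2 \<Rightarrow> real^2 \<Rightarrow> real" where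
  "K_kernel x y = ln (norm (x - y) / jbr x) / (1 + ln (jbr y))"

definition Lp_pow_x :: "real \<Rightarrow> (real^2 \<Rightarrow> real) \<Rightarrow> ennreal" where
  "Lp_pow_x p f = (\<integral>\<^sup>+ x. ennreal (\<bar>f x\<bar> powr p) \<partial>lborel)"

end

theory Submission
  imports Defs "HOL-Real_Asymp.Real_Asymp"
begin

text \<open>
  Write \<open>d = |x - y|\<close>. From \<open>d \<le> 2\<langle>x\<rangle>\<langle>y\<rangle>\<close> and, for \<open>r \<le> 1\<close>,
  \<open>\<langle>x\<rangle> min(d, r) \<le> 3\<langle>y\<rangle> d\<close> one gets \<open>|log d - log \<langle>x\<rangle>| \<le> 2 + log \<langle>y\<rangle> - log min(d, r)\<close>;
  dividing by \<open>1 + log \<langle>y\<rangle>\<close> gives \<open>|K| \<le> C\<^sub>0 + W\<close> with \<open>C\<^sub>0 = 2 - log r\<close> and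
  \<open>W(x, y) = -log |x - y|\<close> on \<open>|x - y| < r\<close>, \<open>W = 0\<close> elsewhere. For \<open>r = e\<^sup>-\<^sup>N\<close> the
  function \<open>W\<^sup>p\<close> is dominated by \<open>\<Sum>\<^sub>k\<^sub>\<ge>\<^sub>N (k + 1)\<^sup>p 1\<^bsub>B(y, e\<^sup>-\<^sup>k)\<^esub>\<close>, so \<open>\<integral> W\<^sup>p dx\<close> is
  bounded, independently of \<open>y\<close>, by the tail \<open>\<Sum>\<^sub>k\<^sub>\<ge>\<^sub>N \<omega>\<^sub>n (k + 1)\<^sup>p e\<^sup>-\<^sup>n\<^sup>k\<close> of a convergent
  series (\<open>\<omega>\<^sub>n\<close> the volume of the unit ball), which is below \<open>\<epsilon>\<^sup>p\<close> for large \<open>N\<close>.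
\<close>

definition truncated_log :: "real \<Rightarrow> 'a::real_normed_vector \<Rightarrow> real" where
  "truncated_log r z = (if norm z < r then - ln (norm z) else 0)"

lemma truncated_log_nonneg:
  assumes "r \<le> 1"
  shows "0 \<le> truncated_log r z"
  using assms by (cases "z = 0") (auto simp: truncated_log_def)

lemma one_le_jbr: "1 \<le> jbr x"
  unfolding jbr_def by simp

lemma norm_le_jbr: "norm x \<le> jbr x"
  unfolding jbr_def by (simp add: real_le_rsqrt)

lemma jbr_le_one_plus_norm: "jbr x \<le> 1 + norm x"
  unfolding jbr_def
  by (rule real_sqrt_le_iff'[THEN iffD2]) (auto simp: power2_eq_square algebra_simps)

lemma norm_diff_le_jbr_mult: "norm (x - y) \<le> 2 * jbr x * jbr y"
proof -
  have "0 \<le> (jbr x - 1) * (jbr y - 1)" "1 \<le> jbr x * jbr y"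
    using one_le_jbr[of x] one_le_jbr[of y] mult_mono[of 1 "jbr x" 1 "jbr y"] by auto
  moreover have "norm (x - y) \<le> jbr x + jbr y"
    using norm_triangle_ineq4[of x y] norm_le_jbr[of x] norm_le_jbr[of y] by linarith
  ultimately show ?thesis by (simp add: algebra_simps)
qed

lemma jbr_mult_min_le:
  assumes "0 < r" "r \<le> 1"
  shows "jbr x * min (norm (x - y)) r \<le> 3 * jbr y * norm (x - y)"
proof -
  define d where "d = norm (x - y)"
  have b: "1 \<le> jbr y" "0 \<le> d" by (simp_all add: one_le_jbr d_def)
  have "jbr x \<le> 2 * jbr y + d"
    using jbr_le_one_plus_norm[of x] norm_le_jbr[of y] norm_triangle_sub[of x y] b
    by (simp add: d_def)
  show ?thesis
  proof (cases "d < r")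
    case True
    then have "jbr x \<le> 3 * jbr y"
      using \<open>jbr x \<le> 2 * jbr y + d\<close> assms b by linarith
    then show ?thesis
      using True b by (simp add: d_def[symmetric] mult_right_mono)
  next
    case False
    have "jbr x * r \<le> (2 * jbr y + d) * r"
      using \<open>jbr x \<le> 2 * jbr y + d\<close> assms by (simp add: mult_right_mono)
    also have "\<dots> \<le> 2 * jbr y * d + jbr y * d"
    proof -
      have "2 * jbr y * r \<le> 2 * jbr y * d" using False b by simp
      moreover have "d * r \<le> jbr y * d" using False assms b mult_mono[of d d r "jbr y"] by simp
      ultimately show ?thesis by (simp add: algebra_simps)
    qed
    finally show ?thesis
      using False by (simp add: d_def[symmetric] mult_ac)
  qed
qed

lemma abs_K_kernel_le:
  assumes "x \<noteq> y" "0 < r" "r \<le> 1"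
  shows "\<bar>K_kernel x y\<bar> \<le> 2 - ln r + truncated_log r (x - y)"
proof -
  define d where "d = norm (x - y)"
  define a where "a = jbr x"
  define b where "b = jbr y"
  define M where "M = - ln r + truncated_log r (x - y)"
  have d: "0 < d" using assms by (simp add: d_def)
  have ab: "1 \<le> a" "1 \<le> b" by (simp_all add: a_def b_def one_le_jbr)
  have "ln r \<le> 0" using assms by simp
  then have M: "0 \<le> M" "- ln (min d r) \<le> M"
    using truncated_log_nonneg[OF \<open>r \<le> 1\<close>, of "x - y"]
    by (auto simp: M_def truncated_log_def d_def min_def)
  have "0 < 2 * a * b" using ab by simp
  then have "ln d \<le> ln (2 * a * b)"
    using norm_diff_le_jbr_mult[of x y] d by (simp add: d_def a_def b_def)
  also have "\<dots> = ln 2 + ln a + ln b"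
    using ab by (simp add: ln_mult)
  finally have upper: "ln d - ln a \<le> 2 + ln b + M"
    using ln_le_minus_one[of 2] M by simp
  have "0 < min d r" using d assms by simp
  then have "0 < a * min d r" using ab by simp
  then have "ln (a * min d r) \<le> ln (3 * b * d)"
    using jbr_mult_min_le[OF assms(2,3), of x y] by (simp add: d_def a_def b_def)
  then have "ln a + ln (min d r) \<le> ln 3 + ln b + ln d"
    using ab d \<open>0 < min d r\<close> by (simp add: ln_mult)
  then have lower: "ln a - ln d \<le> 2 + ln b + M"
    using ln_le_minus_one[of 3] M by simp
  have "\<bar>ln d - ln a\<bar> \<le> 2 + ln b + M"
    using upper lower by linarith
  also have "\<dots> \<le> (1 + ln b) * (2 + M)"
    using ab M mult_nonneg_nonneg[of "ln b" M] by (simp add: algebra_simps)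
  finally have "\<bar>ln d - ln a\<bar> \<le> (1 + ln b) * (2 + M)" .
  moreover have "0 < 1 + ln b" using ln_ge_zero[OF ab(2)] by simp
  ultimately have "\<bar>ln d - ln a\<bar> / (1 + ln b) \<le> 2 + M"
    by (simp add: pos_divide_le_eq mult.commute)
  moreover have "K_kernel x y = (ln d - ln a) / (1 + ln b)"
    using d ab by (simp add: K_kernel_def d_def a_def b_def ln_div)
  ultimately show ?thesis
    using ab by (simp add: M_def abs_divide)
qed

lemma summable_powr_mult_exp:
  assumes "0 < c"
  shows "summable (\<lambda>k::nat. (real k + 1) powr p * exp (- c * real k))"
proof (rule summable_comparison_test_bigo)
  show "summable (\<lambda>k::nat. norm (real k powr -2))"
    by (simp add: summable_real_powr_iff)
  show "(\<lambda>k::nat. (real k + 1) powr p * exp (- c * real k)) \<in> O(\<lambda>k. real k powr -2)"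
    using assms by real_asymp
qed

definition ball_series :: "nat \<Rightarrow> real \<Rightarrow> nat \<Rightarrow> real" where
  "ball_series n p k = unit_ball_vol n * ((real k + 1) powr p * exp (- n * real k))"

lemma summable_ball_series: "0 < n \<Longrightarrow> summable (ball_series n p)"
  unfolding ball_series_def using summable_powr_mult_exp[of "real n" p]
  by (intro summable_mult) simp

lemma term_le_suminf_ennreal: "(f :: nat \<Rightarrow> ennreal) n \<le> (\<Sum>i. f i)"
  using sum_le_suminf[OF summableI, of "{n}" f] by simp

text \<open>If \<open>k \<le> -log |x - y| < k + 1\<close>, the \<open>k\<close>-th term alone dominates.\<close>

lemma truncated_log_powr_le_suminf:
  fixes x y :: "'a::real_normed_vector"
  assumes "0 \<le> p"
  shows "ennreal (\<bar>truncated_log (exp (- real N)) (x - y)\<bar> powr p)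
    \<le> (\<Sum>n. ennreal ((real (n + N) + 1) powr p) * indicator (cball y (exp (- real (n + N)))) x)"
proof (cases "0 < norm (x - y) \<and> norm (x - y) < exp (- real N)")
  case True
  define d where "d = norm (x - y)"
  define m where "m = nat \<lfloor>- ln d\<rfloor>"
  have d: "0 < d" "d < exp (- real N)" using True by (simp_all add: d_def)
  then have N: "real N < - ln d"
    using ln_less_cancel_iff[of d "exp (- real N)"] by simp
  then have m: "real m \<le> - ln d" "- ln d < real m + 1"
    by (simp_all add: m_def)
  then have "N \<le> m" using N by linarith
  have "d \<le> exp (- real m)"
    using m d exp_le_cancel_iff[of "ln d" "- real m"] by simp
  have "\<bar>truncated_log (exp (- real N)) (x - y)\<bar> powr p \<le> (real m + 1) powr p"
    using d N m assms by (simp add: truncated_log_def d_def[symmetric] powr_mono2)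
  then have "ennreal (\<bar>truncated_log (exp (- real N)) (x - y)\<bar> powr p)
      \<le> ennreal ((real ((m - N) + N) + 1) powr p) * indicator (cball y (exp (- real ((m - N) + N)))) x"
    using \<open>N \<le> m\<close> \<open>d \<le> exp (- real m)\<close>
    by (simp add: d_def dist_norm norm_minus_commute ennreal_leI)
  also have "\<dots> \<le> (\<Sum>n. ennreal ((real (n + N) + 1) powr p) * indicator (cball y (exp (- real (n + N)))) x)"
    by (rule term_le_suminf_ennreal)
  finally show ?thesis .
next
  case False
  then have "truncated_log (exp (- real N)) (x - y) = 0"
    by (auto simp: truncated_log_def)
  then show ?thesis by simp
qed

lemma nn_integral_truncated_log_powr_le:
  fixes y :: "'a::euclidean_space"
  assumes "0 \<le> p"
  shows "(\<integral>\<^sup>+ x. ennreal (\<bar>truncated_log (exp (- real N)) (x - y)\<bar> powr p) \<partial>lborel)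
    \<le> ennreal (\<Sum>n. ball_series DIM('a) p (n + N))"
proof -
  define g where "g n x = ennreal ((real (n + N) + 1) powr p) * indicator (cball y (exp (- real (n + N)))) x"
    for n x
  have g_integral: "(\<integral>\<^sup>+ x. g n x \<partial>lborel) = ennreal (ball_series DIM('a) p (n + N))" for n
  proof -
    have ball_power: "exp (- real (n + N)) ^ DIM('a) = exp (- DIM('a) * real (n + N))"
      by (simp add: exp_of_nat_mult[symmetric] algebra_simps)
    have "(\<integral>\<^sup>+ x. g n x \<partial>lborel)
        = ennreal ((real (n + N) + 1) powr p) * emeasure lborel (cball y (exp (- real (n + N))))"
      unfolding g_def by (rule nn_integral_cmult_indicator) simp
    also have "\<dots> = ennreal (ball_series DIM('a) p (n + N))"
      using ball_power by (simp add: ball_series_def emeasure_cball ennreal_mult'[symmetric] algebra_simps)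
    finally show ?thesis .
  qed
  have "(\<integral>\<^sup>+ x. ennreal (\<bar>truncated_log (exp (- real N)) (x - y)\<bar> powr p) \<partial>lborel)
      \<le> (\<integral>\<^sup>+ x. (\<Sum>n. g n x) \<partial>lborel)"
    unfolding g_def by (intro nn_integral_mono truncated_log_powr_le_suminf assms)
  also have "\<dots> = (\<Sum>n. \<integral>\<^sup>+ x. g n x \<partial>lborel)"
    by (rule nn_integral_suminf)
      (simp add: g_def borel_measurable_times_ennreal borel_measurable_indicator)
  also have "\<dots> = ennreal (\<Sum>n. ball_series DIM('a) p (n + N))"
    unfolding g_integral
    by (intro suminf_ennreal2 summable_ignore_initial_segment summable_ball_series)
      (simp_all add: ball_series_def)
  finally show ?thesis .
qed

theorem lemma2p3:
  fixes p \<epsilon> :: real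
  assumes "1 \<le> p" and "\<epsilon> > 0"
  shows "\<exists>(W :: real^2 \<Rightarrow> real^2 \<Rightarrow> real) (C0 :: real).
           (\<forall>x y. 0 \<le> W x y)
         \<and> (\<forall>y. (\<lambda>x. W x y) \<in> borel_measurable lborel)
         \<and> (\<forall>y. Lp_pow_x p (\<lambda>x. W x y) \<le> ennreal (\<epsilon> powr p))
         \<and> (\<forall>x y. x \<noteq> y \<longrightarrow> \<bar>K_kernel x y\<bar> \<le> C0 + W x y)"
proof -
  obtain N where N: "norm (\<Sum>n. ball_series 2 p (n + N)) < \<epsilon> powr p"
    using suminf_exist_split[OF _ summable_ball_series, of "\<epsilon> powr p" 2 p] assms by auto
  define W where "W x y = truncated_log (exp (- real N)) (x - y)" for x y :: "real^2"
  have "0 \<le> W x y" for x y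
    using truncated_log_nonneg[of "exp (- real N)"] by (simp add: W_def)
  moreover have "(\<lambda>x. W x y) \<in> borel_measurable lborel" for y
    unfolding W_def truncated_log_def by measurable
  moreover have "Lp_pow_x p (\<lambda>x. W x y) \<le> ennreal (\<epsilon> powr p)" for y
  proof -
    have "Lp_pow_x p (\<lambda>x. W x y) \<le> ennreal (\<Sum>n. ball_series 2 p (n + N))"
      using nn_integral_truncated_log_powr_le[of p N y] assms
      by (simp add: Lp_pow_x_def W_def)
    also have "\<dots> \<le> ennreal (\<epsilon> powr p)"
      using N by (intro ennreal_leI) simp
    finally show ?thesis .
  qed
  moreover have "\<bar>K_kernel x y\<bar> \<le> (2 + real N) + W x y" if "x \<noteq> y" for x y
    using abs_K_kernel_le[OF that, of "exp (- real N)"] by (simp add: W_def)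
  ultimately show ?thesis
    by (intro exI[of _ W] exI[of _ "2 + real N"]) simp
qed

end
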